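(* For $\alpha,\beta\in\mathbb{R}$, let $\mathfrak{z}$ be the center of $\mathfrak{g}(\alpha,\beta)$. The $10$-dimensional quotient Lie algebra $\mathfrak{g}(\alpha,\beta)/\mathfrak{z}$ is characteristically nilpotent if and only if $(\alpha,\beta)\neq(0,0)$.
   Context: For $\alpha,\beta\in\mathbb{R}$, $\mathfrak{g}(\alpha,\beta)$ is the $11$-dimensional real Lie algebra with basis $e_1,\dots,e_{11}$ whose nonzero brackets (up to skew-symmetry) are: $[e_1,e_i]=e_{i+1}$ for $2\le i\le 10$; $[e_2,e_3]=e_5+\alpha e_6$, $[e_2,e_4]=e_6+\alpha e_7$, $[e_2,e_5]=-e_7+(\alpha-\beta)e_8$, $[e_2,e_6]=-3e_8+(\alpha-2\beta)e_9$, $[e_2,e_7]=-2e_9-\tfrac14(5\alpha+7\beta)e_{10}+\tfrac1{16}(27\alpha^2+12\alpha\beta+\beta^2)e_{11}$, $[e_2,e_8]=2e_{10}-\tfrac14(23\alpha+\beta)e_{11}$, $[e_2,e_9]=-e_{11}$; $[e_3,e_4]=2e_7+\beta e_8$, $[e_3,e_5]=2e_8+\beta e_9$, $[e_3,e_6]=-e_9+\tfrac14(9\alpha-\beta)e_{10}-\tfrac1{16}(27\alpha^2+12\alpha\beta+\beta^2)e_{11}$, $[e_3,e_7]=-4e_{10}+\tfrac32(3\alpha-\beta)e_{11}$, $[e_3,e_8]=3e_{11}$; $[e_4,e_5]=3e_9-\tfrac14(9\alpha-5\beta)e_{10}+\tfrac1{16}(27\alpha^2+12\alpha\beta+\beta^2)e_{11}$,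 $[e_4,e_6]=3e_{10}-\tfrac14(9\alpha-5\beta)e_{11}$, $[e_4,e_7]=-7e_{11}$; $[e_5,e_6]=10e_{11}$; all other brackets $[e_i,e_j]$ with $i<j$ are zero. Its center is $\mathfrak{z}=\mathrm{span}\{e_{11}\}$. A Lie algebra is characteristically nilpotent if all its derivations are nilpotent. *)

theory Defs
  imports Complex_Main
begin

(* Finite-dimensional real algebras are given by structure constants w.r.t. a
   basis e_1,...,e_n (indices 1..n):  [e_i,e_j] = sum_k  c i j k * e_k.
   Linear endomorphisms are given by their matrices D (1-indexed):
   D e_j = sum_i D i j * e_i. *)

definition lc :: "(nat \<times> real) list \<Rightarrow> nat \<Rightarrow> real" where
  "lc xs k = sum_list (map (\<lambda>(m,c). if m = k then c else 0) xs)"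

definition gU :: "real \<Rightarrow> real \<Rightarrow> nat \<Rightarrow> nat \<Rightarrow> nat \<Rightarrow> real" where
  "gU a b i j =
    (if i = 1 \<and> 2 \<le> j \<and> j \<le> 10 then lc [(j+1, 1)]
     else if (i,j) = (2,3) then lc [(5,1),(6,a)]
     else if (i,j) = (2,4) then lc [(6,1),(7,a)]
     else if (i,j) = (2,5) then lc [(7,-1),(8,a-b)]
     else if (i,j) = (2,6) then lc [(8,-3),(9,a-2*b)]
     else if (i,j) = (2,7) then lc [(9,-2),(10,-(1/4)*(5*a+7*b)),
                                    (11,(1/16)*(27*a^2+12*a*b+b^2))]
     else if (i,j) = (2,8) then lc [(10,2),(11,-(1/4)*(23*a+b))]
     else if (i,j) = (2,9) then lc [(11,-1)]
     else if (i,j) = (3,4) then lc [(7,2),(8,b)]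
     else if (i,j) = (3,5) then lc [(8,2),(9,b)]
     else if (i,j) = (3,6) then lc [(9,-1),(10,(1/4)*(9*a-b)),
                                    (11,-(1/16)*(27*a^2+12*a*b+b^2))]
     else if (i,j) = (3,7) then lc [(10,-4),(11,(3/2)*(3*a-b))]
     else if (i,j) = (3,8) then lc [(11,3)]
     else if (i,j) = (4,5) then lc [(9,3),(10,-(1/4)*(9*a-5*b)),
                                    (11,(1/16)*(27*a^2+12*a*b+b^2))]
     else if (i,j) = (4,6) then lc [(10,3),(11,-(1/4)*(9*a-5*b))]
     else if (i,j) = (4,7) then lc [(11,-7)]
     else if (i,j) = (5,6) then lc [(11,10)]
     else lc [])"

definition gstr :: "real \<Rightarrow> real \<Rightarrow> nat \<Rightarrow> nat \<Rightarrow> nat \<Rightarrow> real" where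
  "gstr a b i j k =
    (if i < j then gU a b i j k else if j < i then - gU a b j i k else 0)"

(* Quotient of an n-dimensional algebra (basis e_1..e_n) by the (central) ideal
   span{e_n}: basis given by the images of e_1..e_(n-1); the bracket is the
   bracket of the algebra with the e_n-component dropped. *)
definition quot_last :: "(nat \<Rightarrow> nat \<Rightarrow> nat \<Rightarrow> real) \<Rightarrow> nat \<Rightarrow> nat \<Rightarrow> nat \<Rightarrow> nat \<Rightarrow> real" where
  "quot_last c n i j k = (if i < n \<and> j < n \<and> k < n then c i j k else 0)"

definition is_derivation :: "nat \<Rightarrow> (nat \<Rightarrow> nat \<Rightarrow> nat \<Rightarrow> real) \<Rightarrow> (nat \<Rightarrow> nat \<Rightarrow> real) \<Rightarrow> bool" where
  "is_derivation n c D \<longleftrightarrow>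
     (\<forall>i\<in>{1..n}. \<forall>j\<in>{1..n}. \<forall>k\<in>{1..n}.
        (\<Sum>l=1..n. c i j l * D k l)
        = (\<Sum>l=1..n. D l i * c l j k) + (\<Sum>l=1..n. D l j * c i l k))"

definition mmult :: "nat \<Rightarrow> (nat \<Rightarrow> nat \<Rightarrow> real) \<Rightarrow> (nat \<Rightarrow> nat \<Rightarrow> real) \<Rightarrow> nat \<Rightarrow> nat \<Rightarrow> real" where
  "mmult n A B i j = (\<Sum>l=1..n. A i l * B l j)"

primrec mpow :: "nat \<Rightarrow> (nat \<Rightarrow> nat \<Rightarrow> real) \<Rightarrow> nat \<Rightarrow> nat \<Rightarrow> nat \<Rightarrow> real" where
  "mpow n A 0 = (\<lambda>i j. if i = j then 1 else 0)"
| "mpow n A (Suc m) = mmult n A (mpow n A m)"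

definition nilpotent_map :: "nat \<Rightarrow> (nat \<Rightarrow> nat \<Rightarrow> real) \<Rightarrow> bool" where
  "nilpotent_map n D \<longleftrightarrow> (\<exists>m. \<forall>i\<in>{1..n}. \<forall>j\<in>{1..n}. mpow n D m i j = 0)"

definition char_nilpotent :: "nat \<Rightarrow> (nat \<Rightarrow> nat \<Rightarrow> nat \<Rightarrow> real) \<Rightarrow> bool" where
  "char_nilpotent n c \<longleftrightarrow> (\<forall>D. is_derivation n c D \<longrightarrow> nilpotent_map n D)"

end

(*
  Let D be a derivation of g(alpha,beta)/z and t = D_11.  Since ad e1 shifts e2 -> e3 -> ... -> e10
  and every bracket [e_i,e_j] lies in span{e_k : k >= i + j}, comparing coefficients in
  D[e1,e_j] = [D e1, e_j] + [e1, D e_j] shows that D e_m = D_mm e_m + (terms in e_k, k > m) with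
  D_mm = D_22 + (m - 2) t; the bracket [e2,e3] then gives D_22 = 2t.  So D is nilpotent iff t = 0.
  For alpha = beta = 0 the algebra is graded and the grading derivation e_i -> i e_i is not
  nilpotent.  Otherwise a handful of further coefficients of the derivation identity give
  (3 alpha + beta) t = 0 and alpha (9 alpha - 22 beta) t = 0, which force t = 0.
*)
theory Submission
  imports Defs
begin

definition filtered_algebra :: "(nat \<Rightarrow> nat \<Rightarrow> nat \<Rightarrow> real) \<Rightarrow> bool" where
  "filtered_algebra c \<longleftrightarrow> (\<forall>i j k. c i j k \<noteq> 0 \<longrightarrow> i + j \<le> k)"

definition graded_algebra :: "(nat \<Rightarrow> nat \<Rightarrow> nat \<Rightarrow> real) \<Rightarrow> bool" where
  "graded_algebra c \<longleftrightarrow> (\<forall>i j k. c i j k \<noteq> 0 \<longrightarrow> k = i + j)"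

definition ad_e1_shift :: "nat \<Rightarrow> (nat \<Rightarrow> nat \<Rightarrow> nat \<Rightarrow> real) \<Rightarrow> bool" where
  "ad_e1_shift n c \<longleftrightarrow>
     (\<forall>l\<in>{1..n}. \<forall>k\<in>{1..n}. c 1 l k = (if 2 \<le> l \<and> k = l + 1 then 1 else 0))"

definition strictly_lower :: "nat \<Rightarrow> (nat \<Rightarrow> nat \<Rightarrow> real) \<Rightarrow> bool" where
  "strictly_lower n D \<longleftrightarrow> (\<forall>i\<in>{1..n}. \<forall>j\<in>{1..n}. i \<le> j \<longrightarrow> D i j = 0)"

definition grading_derivation :: "nat \<Rightarrow> nat \<Rightarrow> real" where
  "grading_derivation i j = (if i = j then real i else 0)"

lemma is_derivationD:
  assumes "is_derivation n c D" "i \<in> {1..n}" "j \<in> {1..n}" "k \<in> {1..n}"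
  shows "(\<Sum>l=1..n. c i j l * D k l) = (\<Sum>l=1..n. D l i * c l j k) + (\<Sum>l=1..n. D l j * c i l k)"
  using assms unfolding is_derivation_def by blast

lemma mpow_strictly_lower:
  assumes "strictly_lower n D" "i \<in> {1..n}" "j \<in> {1..n}" "i < j + m"
  shows "mpow n D m i j = 0"
  using assms(2-4)
proof (induction m arbitrary: i)
  case 0
  then show ?case by simp
next
  case (Suc m)
  have "D i l * mpow n D m l j = 0" if "l \<in> {1..n}" for l
    using assms(1) Suc that unfolding strictly_lower_def by (cases "i \<le> l") auto
  then show ?case
    unfolding mpow.simps mmult_def by (intro sum.neutral) blast
qed

lemma strictly_lower_nilpotent:
  assumes "strictly_lower n D"
  shows "nilpotent_map n D"
  unfolding nilpotent_map_def
proof (intro exI ballI)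
  fix i j assume "i \<in> {1..n}" "j \<in> {1..n}"
  then show "mpow n D n i j = 0"
    using mpow_strictly_lower[OF assms] by simp
qed

lemma grading_derivation_sym: "grading_derivation i j = grading_derivation j i"
  by (simp add: grading_derivation_def)

lemma sum_grading_derivation:
  assumes "k \<in> {1..n}"
  shows "(\<Sum>l=1..n. grading_derivation k l * f l) = real k * f k"
proof -
  have "(\<Sum>l=1..n. grading_derivation k l * f l) = (\<Sum>l=1..n. if l = k then real k * f k else 0)"
    by (rule sum.cong) (auto simp: grading_derivation_def)
  then show ?thesis
    using assms by simp
qed

lemma is_derivation_grading_derivation:
  assumes "graded_algebra c"
  shows "is_derivation n c grading_derivation"
  unfolding is_derivation_def
proof (intro ballI)
  fix i j k assume i: "i \<in> {1..n}" and j: "j \<in> {1..n}" and k: "k \<in> {1..n}"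
  have "(\<Sum>l=1..n. c i j l * grading_derivation k l) = real k * c i j k"
    using sum_grading_derivation[OF k, of "c i j"] by (simp add: mult.commute)
  moreover have "(\<Sum>l=1..n. grading_derivation l i * c l j k) = real i * c i j k"
    using sum_grading_derivation[OF i, of "\<lambda>l. c l j k"] by (simp add: grading_derivation_sym)
  moreover have "(\<Sum>l=1..n. grading_derivation l j * c i l k) = real j * c i j k"
    using sum_grading_derivation[OF j, of "\<lambda>l. c i l k"] by (simp add: grading_derivation_sym)
  moreover have "real k * c i j k = real i * c i j k + real j * c i j k"
    using assms[unfolded graded_algebra_def, rule_format, of i j k]
    by (cases "c i j k = 0") (auto simp: algebra_simps)
  ultimately show "(\<Sum>l=1..n. c i j l * grading_derivation k l)
      = (\<Sum>l=1..n. grading_derivation l i * c l j k) + (\<Sum>l=1..n. grading_derivation l j * c i l k)"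
    by simp
qed

lemma mpow_grading_derivation_diag:
  assumes "i \<in> {1..n}"
  shows "mpow n grading_derivation m i i = real i ^ m"
proof (induction m)
  case (Suc m)
  then show ?case
    unfolding mpow.simps mmult_def sum_grading_derivation[OF assms] by simp
qed simp

lemma grading_derivation_not_nilpotent:
  assumes "1 \<le> n"
  shows "\<not> nilpotent_map n grading_derivation"
proof
  assume "nilpotent_map n grading_derivation"
  then obtain m where "\<forall>i\<in>{1..n}. \<forall>j\<in>{1..n}. mpow n grading_derivation m i j = 0"
    unfolding nilpotent_map_def by blast
  then show False
    using assms mpow_grading_derivation_diag[of 1 n m] by simp
qed

lemma derivation_ad_e1_recurrence:
  assumes der: "is_derivation n c D" and shift: "ad_e1_shift n c" and filt: "filtered_algebra c"
    and j: "2 \<le> j" "j < n" and k: "1 \<le> k" "k \<le> j + 1"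
  shows "D k (j + 1) = (if k = j + 1 then D 1 1 else 0) + (if 3 \<le> k then D (k - 1) j else 0)"
proof -
  have c1: "c 1 l m = (if 2 \<le> l \<and> m = l + 1 then 1 else 0)" if "l \<in> {1..n}" "m \<in> {1..n}" for l m
    using shift that unfolding ad_e1_shift_def by blast
  have c_low: "c l j k = (if l = 1 \<and> k = j + 1 then 1 else 0)" if "l \<in> {1..n}" for l
  proof (cases "l = 1")
    case True
    then show ?thesis using c1 j k by simp
  next
    case False
    with that k have "\<not> l + j \<le> k" by simp
    then have "c l j k = 0" using filt unfolding filtered_algebra_def by blast
    with False show ?thesis by simp
  qed
  have "(\<Sum>l=1..n. c 1 j l * D k l) = (\<Sum>l=1..n. if l = j + 1 then D k l else 0)"
    using j k c1[of j] by (intro sum.cong) auto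
  also have "\<dots> = D k (j + 1)"
    using j by simp
  finally have lhs: "(\<Sum>l=1..n. c 1 j l * D k l) = D k (j + 1)" .
  have "(\<Sum>l=1..n. D l 1 * c l j k) = (\<Sum>l=1..n. if l = 1 then (if k = j + 1 then D 1 1 else 0) else 0)"
    by (intro sum.cong) (simp_all add: c_low)
  also have "\<dots> = (if k = j + 1 then D 1 1 else 0)"
    using j by simp
  finally have rhs1: "(\<Sum>l=1..n. D l 1 * c l j k) = (if k = j + 1 then D 1 1 else 0)" .
  have "(\<Sum>l=1..n. D l j * c 1 l k) = (\<Sum>l=1..n. if l = k - 1 then (if 3 \<le> k then D l j else 0) else 0)"
    using j k c1[of _ k] by (intro sum.cong) auto
  also have "\<dots> = (if 3 \<le> k then D (k - 1) j else 0)"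
    using j k by auto
  finally have rhs2: "(\<Sum>l=1..n. D l j * c 1 l k) = (if 3 \<le> k then D (k - 1) j else 0)" .
  show ?thesis
    using is_derivationD[OF der, of 1 j k] j k lhs rhs1 rhs2 by simp
qed

lemma derivation_above_diagonal_zero:
  assumes der: "is_derivation n c D" and shift: "ad_e1_shift n c" and filt: "filtered_algebra c"
    and m: "3 \<le> m" "m \<le> n" and k: "1 \<le> k" "k < m"
  shows "D k m = 0"
  using m k
proof (induction m arbitrary: k rule: nat_induct_at_least)
  case base
  then show ?case
    using derivation_ad_e1_recurrence[OF der shift filt, of 2 k] by simp
next
  case (Suc m)
  then show ?case
    using derivation_ad_e1_recurrence[OF der shift filt, of m k] by simp
qed

lemma derivation_diagonal:
  assumes der: "is_derivation n c D" and shift: "ad_e1_shift n c" and filt: "filtered_algebra c"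
    and m: "2 \<le> m" "m \<le> n"
  shows "D m m = D 2 2 + real (m - 2) * D 1 1"
  using m
proof (induction m rule: nat_induct_at_least)
  case base
  then show ?case by simp
next
  case (Suc m)
  then show ?case
    using derivation_ad_e1_recurrence[OF der shift filt, of m "m + 1"] by (simp add: algebra_simps)
qed

abbreviation g_mod_center :: "real \<Rightarrow> real \<Rightarrow> nat \<Rightarrow> nat \<Rightarrow> nat \<Rightarrow> real" where
  "g_mod_center a b \<equiv> quot_last (gstr a b) 11"

lemmas g_mod_center_defs = quot_last_def gstr_def gU_def lc_def

lemma g_mod_center_ad_e1_shift: "ad_e1_shift 10 (g_mod_center a b)"
  unfolding ad_e1_shift_def by (auto simp: g_mod_center_defs)

lemma g_mod_center_filtered: "filtered_algebra (g_mod_center a b)"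
proof -
  have "i + j \<le> k" if "gU a b i j k \<noteq> 0" for i j k
    using that unfolding gU_def lc_def by (simp split: if_splits)
  then show ?thesis
    unfolding filtered_algebra_def quot_last_def gstr_def by (fastforce split: if_splits)
qed

lemma g_mod_center_00_graded: "graded_algebra (g_mod_center 0 0)"
proof -
  have "k = i + j" if "gU 0 0 i j k \<noteq> 0" for i j k
    using that unfolding gU_def lc_def by (simp split: if_splits)
  then show ?thesis
    unfolding graded_algebra_def quot_last_def gstr_def by (fastforce split: if_splits)
qed

lemma sum_1_10: "(\<Sum>l::nat=1..10. f l) = f 1 + f 2 + f 3 + f 4 + f 5 + f 6 + f 7 + f 8 + f 9 + (f 10 :: real)"
  by (simp add: eval_nat_numeral atLeastAtMostSuc_conv)

lemma g_mod_center_derivation_above_diagonal: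
  assumes der: "is_derivation 10 (g_mod_center a b) D" and km: "1 \<le> k" "k < m" "m \<le> 10"
  shows "D k m = 0"
proof -
  note above = derivation_above_diagonal_zero[OF der g_mod_center_ad_e1_shift g_mod_center_filtered]
  show ?thesis
  proof (cases "m = 2")
    case True
    have "D 1 2 = 0"
      using is_derivationD[OF der, of 2 3 4, unfolded sum_1_10] above[of 5 4] above[of 6 4]
      by (simp add: g_mod_center_defs)
    moreover have "k = 1" "m = 2"
      using True km by simp_all
    ultimately show ?thesis by simp
  next
    case False
    with km show ?thesis using above by simp
  qed
qed

lemma g_mod_center_derivation_diagonal:
  assumes der: "is_derivation 10 (g_mod_center a b) D" and m: "1 \<le> m" "m \<le> 10"
  shows "D m m = real m * D 1 1"
proof -
  note diag = derivation_diagonal[OF der g_mod_center_ad_e1_shift g_mod_center_filtered]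
  have "D 5 5 = D 2 2 + D 3 3"
    using is_derivationD[OF der, of 2 3 5, unfolded sum_1_10]
      g_mod_center_derivation_above_diagonal[OF der, of 5 6]
    by (simp add: g_mod_center_defs)
  then have "D 2 2 = 2 * D 1 1"
    using diag[of 5] diag[of 3] by simp
  then show ?thesis
    using m diag[of m] by (cases "m = 1") (simp_all add: algebra_simps)
qed

lemma g_mod_center_derivation_D11_constraints:
  assumes der: "is_derivation 10 (g_mod_center a b) D"
  shows "(3 * a + b) * D 1 1 = 0" and "(9 * a - 22 * b) * a * D 1 1 = 0"
proof -
  note E = is_derivationD[OF der, unfolded sum_1_10]
  have diag: "D m m = real m * D 1 1" if "2 \<le> m" "m \<le> 10" for m
    using g_mod_center_derivation_diagonal[OF der, of m] that by simp
  note entries = g_mod_center_defs g_mod_center_derivation_above_diagonal[OF der] diag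
  (* e_ijk is the e_k-coefficient of D[e_i,e_j] = [D e_i, e_j] + [e_i, D e_j]. *)
  have e135: "D 5 4 = D 4 3 + D 2 1" using E[of 1 3 5] by (simp add: entries)
  have e146: "D 6 5 = D 5 4 + D 2 1" using E[of 1 4 6] by (simp add: entries)
  have e157: "D 7 6 = D 6 5 - D 2 1" using E[of 1 5 7] by (simp add: entries)
  have e168: "D 8 7 = D 7 6 - 3 * D 2 1" using E[of 1 6 8] by (simp add: entries)
  have e179: "D 9 8 = D 8 7 - 2 * D 2 1" using E[of 1 7 9] by (simp add: entries)
  have e125: "D 5 3 = D 4 2 - D 3 1" using E[of 1 2 5] by (simp add: entries)
  have e136: "D 6 4 = D 5 3 + a * D 2 1" using E[of 1 3 6] by (simp add: entries)
  have e147: "D 7 5 = D 6 4 + a * D 2 1 + 2 * D 3 1" using E[of 1 4 7] by (simp add: entries)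
  have e158: "D 8 6 = D 7 5 + (a - b) * D 2 1 + 2 * D 3 1" using E[of 1 5 8] by (simp add: entries)
  have e169: "D 9 7 = D 8 6 + (a - 2 * b) * D 2 1 - D 3 1" using E[of 1 6 9] by (simp add: entries)
  have e236: "D 6 5 + a * D 1 1 = D 4 3" using E[of 2 3 6] by (simp add: entries)
  have e348: "2 * D 8 7 + b * D 1 1 = 2 * D 5 4" using E[of 3 4 8] by (simp add: entries)
  have e237: "D 7 5 + a * D 7 6 + 2 * D 4 2 + D 5 3 = a * D 4 3" using E[of 2 3 7] by (simp add: entries)
  have e349: "2 * D 9 7 + b * D 9 8 + 3 * D 5 3 + D 6 4 = b * D 5 4" using E[of 3 4 9] by (simp add: entries)
  have D21: "2 * D 2 1 = - a * D 1 1"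
    using e135 e146 e236 by linarith
  have b_D11: "b * D 1 1 = 6 * D 2 1"
    using e135 e146 e157 e168 e348 by linarith
  have D42_a: "4 * D 4 2 = - 3 * a * D 2 1"
    using e135 e146 e157 e125 e136 e147 e237 by algebra
  have D42_b: "6 * D 4 2 + (9 * a - 11 * b) * D 2 1 = 0"
    using e135 e146 e157 e168 e179 e125 e136 e147 e158 e169 e349 by algebra
  show "(3 * a + b) * D 1 1 = 0"
    using D21 b_D11 by (simp add: algebra_simps)
  show "(9 * a - 22 * b) * a * D 1 1 = 0"
    using D21 D42_a D42_b by algebra
qed

lemma g_mod_center_derivation_D11_zero:
  assumes der: "is_derivation 10 (g_mod_center a b) D" and ab: "(a, b) \<noteq> (0, 0)"
  shows "D 1 1 = 0"
proof (rule ccontr)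
  assume "D 1 1 \<noteq> 0"
  with g_mod_center_derivation_D11_constraints[OF der]
  have "b = - 3 * a" "(9 * a - 22 * b) * a = 0" by auto
  then have "a = 0" by simp
  with \<open>b = - 3 * a\<close> ab show False by simp
qed

lemma g_mod_center_derivation_strictly_lower:
  assumes der: "is_derivation 10 (g_mod_center a b) D" and ab: "(a, b) \<noteq> (0, 0)"
  shows "strictly_lower 10 D"
  unfolding strictly_lower_def
proof (intro ballI impI)
  fix i j :: nat assume "i \<in> {1..10}" "j \<in> {1..10}" "i \<le> j"
  then show "D i j = 0"
    using g_mod_center_derivation_above_diagonal[OF der, of i j]
      g_mod_center_derivation_diagonal[OF der, of i] g_mod_center_derivation_D11_zero[OF der ab]
    by (cases "i = j") auto
qed

theorem proposition4p4:
  fixes \<alpha> \<beta> :: real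
  shows "char_nilpotent 10 (quot_last (gstr \<alpha> \<beta>) 11) \<longleftrightarrow> (\<alpha>, \<beta>) \<noteq> (0, 0)"
proof
  assume char_nil: "char_nilpotent 10 (quot_last (gstr \<alpha> \<beta>) 11)"
  show "(\<alpha>, \<beta>) \<noteq> (0, 0)"
  proof
    assume "(\<alpha>, \<beta>) = (0, 0)"
    then have "is_derivation 10 (quot_last (gstr \<alpha> \<beta>) 11) grading_derivation"
      using is_derivation_grading_derivation[OF g_mod_center_00_graded] by simp
    then show False
      using char_nil grading_derivation_not_nilpotent[of 10] unfolding char_nilpotent_def by simp
  qed
next
  assume "(\<alpha>, \<beta>) \<noteq> (0, 0)"
  then show "char_nilpotent 10 (quot_last (gstr \<alpha> \<beta>) 11)"
    unfolding char_nilpotent_def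
    using g_mod_center_derivation_strictly_lower strictly_lower_nilpotent by blast
qed

end
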